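(* Let $\mathcal H_1,\dots,\mathcal H_7,\mathcal H_E$ be finite-dimensional complex Hilbert spaces and $|\psi\rangle\in\mathcal H_1\otimes\cdots\otimes\mathcal H_7\otimes\mathcal H_E$. For each $k\in[7]$ let $X_k,Z_k$ be Hermitian operators on $\mathcal H_k$ (extended by the identity to the whole space). Define $\tilde S_1=X_4X_5X_6X_7$, $\tilde S_2=X_2X_3X_6X_7$, $\tilde S_3=X_1X_3X_5X_7$, $\tilde S_4=X_1X_2X_5X_6$, $\tilde S_5=Z_4Z_5Z_6Z_7$, $\tilde S_6=Z_2Z_3Z_6Z_7$, $\tilde S_7=Z_1Z_3Z_5Z_7$, $\tilde S_8=Z_1Z_2Z_5Z_6$. Assume (i) $X_kZ_k+Z_kX_k=0$ for $k\in\{2,3,5,7\}$; (ii) $\tilde S_k|\psi\rangle=|\psi\rangle$ for all $k\in[8]$; (iii) $X_k^2=Z_k^2=I$ for $k\in\{1,4,6\}$. Then for every $k\in[7]$: $X_k^2|\psi\rangle=Z_k^2|\psi\rangle=|\psi\rangle$ and $(X_kZ_k+Z_kX_k)|\psi\rangle=0$.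
   Context: Operators acting on different tensor factors commute. *)

theory Defs
  imports Complex_Main
begin

text \<open>Model: a finite-dimensional complex Hilbert space H is C^I for a finite index type I
(orthonormal basis indexed by I).
The global space H1 x ... x H7 x HE is C^(I1 x ... x I7 x IE); an operator acting on
factor k is extended by the identity on the other factors via a get/put pair
selecting the k-th coordinate of a basis index.\<close>

type_synonym 'a cmat = "'a \<Rightarrow> 'a \<Rightarrow> complex"

definition mmult :: "'a::finite cmat \<Rightarrow> 'a cmat \<Rightarrow> 'a cmat" where
  "mmult A B = (\<lambda>i j. \<Sum>k\<in>UNIV. A i k * B k j)"

definition mid :: "'a cmat" where
  "mid = (\<lambda>i j. if i = j then 1 else 0)"

definition hermitian :: "'a cmat \<Rightarrow> bool" where
  "hermitian A \<longleftrightarrow> (\<forall>i j. A i j = cnj (A j i))"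

definition anticommute :: "'a::finite cmat \<Rightarrow> 'a cmat \<Rightarrow> bool" where
  "anticommute A B \<longleftrightarrow> (\<forall>i j. mmult A B i j + mmult B A i j = 0)"

definition lift :: "('i \<Rightarrow> 'a) \<Rightarrow> ('a \<Rightarrow> 'i \<Rightarrow> 'i) \<Rightarrow> 'a::finite cmat
                    \<Rightarrow> ('i \<Rightarrow> complex) \<Rightarrow> ('i \<Rightarrow> complex)" where
  "lift get put A v = (\<lambda>x. \<Sum>b\<in>UNIV. A (get x) b * v (put b x))"

definition get1 where "get1 = (\<lambda>(x1,r). x1)"
definition put1 where "put1 b = (\<lambda>(x1,r). (b,r))"
definition get2 where "get2 = (\<lambda>(x1,x2,r). x2)"
definition put2 where "put2 b = (\<lambda>(x1,x2,r). (x1,b,r))"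
definition get3 where "get3 = (\<lambda>(x1,x2,x3,r). x3)"
definition put3 where "put3 b = (\<lambda>(x1,x2,x3,r). (x1,x2,b,r))"
definition get4 where "get4 = (\<lambda>(x1,x2,x3,x4,r). x4)"
definition put4 where "put4 b = (\<lambda>(x1,x2,x3,x4,r). (x1,x2,x3,b,r))"
definition get5 where "get5 = (\<lambda>(x1,x2,x3,x4,x5,r). x5)"
definition put5 where "put5 b = (\<lambda>(x1,x2,x3,x4,x5,r). (x1,x2,x3,x4,b,r))"
definition get6 where "get6 = (\<lambda>(x1,x2,x3,x4,x5,x6,r). x6)"
definition put6 where "put6 b = (\<lambda>(x1,x2,x3,x4,x5,x6,r). (x1,x2,x3,x4,x5,b,r))"
definition get7 where "get7 = (\<lambda>(x1,x2,x3,x4,x5,x6,x7,r). x7)"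
definition put7 where "put7 b = (\<lambda>(x1,x2,x3,x4,x5,x6,x7,r). (x1,x2,x3,x4,x5,x6,b,r))"

definition concl_at :: "('i \<Rightarrow> 'a) \<Rightarrow> ('a \<Rightarrow> 'i \<Rightarrow> 'i) \<Rightarrow> 'a::finite cmat \<Rightarrow> 'a cmat
                        \<Rightarrow> ('i \<Rightarrow> complex) \<Rightarrow> bool" where
  "concl_at get put X Z psi \<longleftrightarrow>
     lift get put X (lift get put X psi) = psi \<and>
     lift get put Z (lift get put Z psi) = psi \<and>
     (\<lambda>i. lift get put X (lift get put Z psi) i + lift get put Z (lift get put X psi) i) = (\<lambda>i. 0)"

end

theory Submission
  imports Defs
begin

text \<open>Squaring the \<open>X\<close>-type stabilisers and cancelling the involutions \<open>X\<^sub>1, X\<^sub>4, X\<^sub>6\<close>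
  leaves products of the positive operators \<open>X\<^sub>k\<^sup>2\<close> (\<open>k = 2, 3, 5, 7\<close>) fixing \<open>\<psi>\<close>; combining them
  yields \<open>X\<^sub>2\<^sup>4\<psi> = \<psi>\<close>, so \<open>X\<^sub>2\<^sup>2\<psi> = \<psi>\<close> by positivity, and then all \<open>X\<^sub>k\<^sup>2\<psi> = \<psi>\<close>; likewise for \<open>Z\<close>.
  For the anticommutators on factors 1, 6 and 4, which are not assumed, use a stabiliser to
  write e.g. \<open>X\<^sub>1\<psi> = X\<^sub>3X\<^sub>5X\<^sub>7\<psi>\<close> and \<open>Z\<^sub>1\<psi> = Z\<^sub>3Z\<^sub>5Z\<^sub>7\<psi>\<close>; then \<open>X\<^sub>1Z\<^sub>1\<psi>\<close> and \<open>Z\<^sub>1X\<^sub>1\<psi>\<close> differ by the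
  sign picked up on the three anticommuting factors. Factor 4 is handled last, through factors
  5, 7 and the anticommutation on \<open>\<psi>\<close> already established for factor 6.\<close>

text \<open>The lens laws for a coordinate of the basis index: \<open>'i\<close> splits as \<open>'a\<close> times the rest.\<close>

definition tensor_factor :: "('i \<Rightarrow> 'a) \<Rightarrow> ('a \<Rightarrow> 'i \<Rightarrow> 'i) \<Rightarrow> bool" where
  "tensor_factor get put \<longleftrightarrow>
     (\<forall>b x. get (put b x) = b) \<and> (\<forall>x. put (get x) x = x) \<and> (\<forall>b c x. put b (put c x) = put b x)"

definition disjoint_factors ::
    "('i \<Rightarrow> 'a) \<Rightarrow> ('a \<Rightarrow> 'i \<Rightarrow> 'i) \<Rightarrow> ('i \<Rightarrow> 'b) \<Rightarrow> ('b \<Rightarrow> 'i \<Rightarrow> 'i) \<Rightarrow> bool" where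
  "disjoint_factors g1 p1 g2 p2 \<longleftrightarrow>
     (\<forall>a x. g2 (p1 a x) = g2 x) \<and> (\<forall>b x. g1 (p2 b x) = g1 x) \<and>
     (\<forall>a b x. p2 b (p1 a x) = p1 a (p2 b x))"

definition anticommute_on :: "('i \<Rightarrow> 'a) \<Rightarrow> ('a \<Rightarrow> 'i \<Rightarrow> 'i) \<Rightarrow> 'a::finite cmat \<Rightarrow> 'a cmat
                              \<Rightarrow> ('i \<Rightarrow> complex) \<Rightarrow> bool" where
  "anticommute_on get put X Z v \<longleftrightarrow>
     (\<lambda>i. lift get put X (lift get put Z v) i + lift get put Z (lift get put X v) i) = (\<lambda>i. 0)"

lemma disjoint_factors_sym: "disjoint_factors g1 p1 g2 p2 \<Longrightarrow> disjoint_factors g2 p2 g1 p1"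
  unfolding disjoint_factors_def by metis

lemma lift_commute:
  fixes A :: "'a::finite cmat" and B :: "'b::finite cmat"
  assumes "disjoint_factors g1 p1 g2 p2"
  shows "lift g2 p2 B (lift g1 p1 A v) = lift g1 p1 A (lift g2 p2 B v)"
proof
  fix x
  have "lift g2 p2 B (lift g1 p1 A v) x
      = (\<Sum>b\<in>UNIV. \<Sum>a\<in>UNIV. B (g2 x) b * (A (g1 x) a * v (p1 a (p2 b x))))"
    using assms unfolding lift_def disjoint_factors_def by (simp add: sum_distrib_left)
  also have "\<dots> = (\<Sum>a\<in>UNIV. \<Sum>b\<in>UNIV. A (g1 x) a * (B (g2 x) b * v (p2 b (p1 a x))))"
    using assms unfolding disjoint_factors_def by (subst sum.swap) (simp add: algebra_simps)
  also have "\<dots> = lift g1 p1 A (lift g2 p2 B v) x"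
    using assms unfolding lift_def disjoint_factors_def by (simp add: sum_distrib_left)
  finally show "lift g2 p2 B (lift g1 p1 A v) x = lift g1 p1 A (lift g2 p2 B v) x" .
qed

lemma lift_mmult:
  fixes A B :: "'a::finite cmat"
  assumes "tensor_factor g p"
  shows "lift g p A (lift g p B v) = lift g p (mmult A B) v"
proof
  fix x
  have "lift g p A (lift g p B v) x = (\<Sum>a\<in>UNIV. \<Sum>b\<in>UNIV. A (g x) a * (B a b * v (p b x)))"
    using assms unfolding lift_def tensor_factor_def by (simp add: sum_distrib_left)
  also have "\<dots> = (\<Sum>b\<in>UNIV. \<Sum>a\<in>UNIV. A (g x) a * B a b * v (p b x))"
    by (subst sum.swap) (simp add: algebra_simps)
  also have "\<dots> = lift g p (mmult A B) v x"
    unfolding lift_def mmult_def by (simp add: sum_distrib_right)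
  finally show "lift g p A (lift g p B v) x = lift g p (mmult A B) v x" .
qed

lemma lift_mid:
  assumes "tensor_factor g p"
  shows "lift g p (mid :: 'a::finite cmat) v = v"
proof
  fix x
  have "lift g p (mid :: 'a cmat) v x = (\<Sum>b\<in>UNIV. if b = g x then v (p b x) else 0)"
    unfolding lift_def mid_def by (rule sum.cong) auto
  also have "\<dots> = v x"
    using assms unfolding tensor_factor_def by simp
  finally show "lift g p (mid :: 'a cmat) v x = v x" .
qed

lemma lift_uminus_matrix: "lift g p (\<lambda>i j. - (M :: 'a::finite cmat) i j) v = (\<lambda>x. - lift g p M v x)"
  unfolding lift_def by (simp add: sum_negf)

lemma lift_uminus: "lift g p (M :: 'a::finite cmat) (\<lambda>x. - v x) = (\<lambda>x. - lift g p M v x)"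
  unfolding lift_def by (simp add: sum_negf)

lemma lift_add:
  "lift g p (M :: 'a::finite cmat) (\<lambda>x. u x + v x) = (\<lambda>x. lift g p M u x + lift g p M v x)"
  unfolding lift_def by (simp add: sum.distrib algebra_simps)

lemma lift_diff:
  "lift g p (M :: 'a::finite cmat) (\<lambda>x. u x - v x) = (\<lambda>x. lift g p M u x - lift g p M v x)"
  unfolding lift_def by (simp add: sum_subtractf algebra_simps)

lemma lift_zero: "lift g p (M :: 'a::finite cmat) (\<lambda>x. 0) = (\<lambda>x. 0)"
  unfolding lift_def by simp

lemma mmult_assoc: "mmult (mmult A B) C = mmult A (mmult B (C :: 'a::finite cmat))"
proof (intro ext)
  fix i j
  have "mmult (mmult A B) C i j = (\<Sum>k\<in>UNIV. \<Sum>l\<in>UNIV. A i l * B l k * C k j)"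
    unfolding mmult_def by (simp add: sum_distrib_right)
  also have "\<dots> = (\<Sum>l\<in>UNIV. \<Sum>k\<in>UNIV. A i l * (B l k * C k j))"
    by (subst sum.swap) (simp add: mult.assoc)
  also have "\<dots> = mmult A (mmult B C) i j"
    unfolding mmult_def by (simp add: sum_distrib_left)
  finally show "mmult (mmult A B) C i j = mmult A (mmult B C) i j" .
qed

lemma anticommute_mmult: "anticommute A B \<Longrightarrow> mmult A B = (\<lambda>i j. - mmult B A i j)"
  unfolding anticommute_def by (auto simp: fun_eq_iff eq_neg_iff_add_eq_0)

lemma anticommute_on_if_anticommute:
  assumes "tensor_factor g p" and "anticommute X Z"
  shows "anticommute_on g p X Z v"
  using assms unfolding anticommute_on_def
  by (simp add: lift_mmult anticommute_mmult lift_uminus_matrix)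

text \<open>The substitution \<open>(x, b) \<mapsto> (put b x, get x)\<close> is a bijection on index pairs by the lens
  laws.\<close>
lemma lift_hermitian_adjoint:
  fixes A :: "'a::finite cmat" and u v :: "'i::finite \<Rightarrow> complex"
  assumes f: "tensor_factor g p" and h: "hermitian A"
  shows "(\<Sum>x\<in>UNIV. cnj (u x) * lift g p A v x) = (\<Sum>x\<in>UNIV. cnj (lift g p A u x) * v x)"
proof -
  have lens: "\<And>b x. g (p b x) = b" "\<And>x. p (g x) x = x" "\<And>b c x. p b (p c x) = p b x"
    using f unfolding tensor_factor_def by auto
  have "(\<Sum>x\<in>UNIV. cnj (u x) * lift g p A v x)
      = (\<Sum>(x, b)\<in>UNIV \<times> UNIV. cnj (u x) * A (g x) b * v (p b x))"
    unfolding lift_def sum.cartesian_product[symmetric] by (simp only: sum_distrib_left mult.assoc)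
  also have "\<dots> = (\<Sum>(y, c)\<in>UNIV \<times> UNIV. cnj (u (p c y)) * A c (g y) * v y)"
    by (rule sum.reindex_bij_witness[where i="\<lambda>(y, c). (p c y, g y)" and j="\<lambda>(y, c). (p c y, g y)"])
       (auto simp: lens)
  also have "\<dots> = (\<Sum>y\<in>UNIV. \<Sum>c\<in>UNIV. cnj (A (g y) c * u (p c y)) * v y)"
    unfolding sum.cartesian_product[symmetric] using h unfolding hermitian_def
    by (intro sum.cong refl) (metis complex_cnj_mult mult.commute)
  also have "\<dots> = (\<Sum>y\<in>UNIV. cnj (lift g p A u y) * v y)"
    unfolding lift_def by (simp only: cnj_sum sum_distrib_right)
  finally show ?thesis .
qed

lemma sum_cnj_mult_self: "(\<Sum>x\<in>UNIV. cnj (w x) * w x) = complex_of_real (\<Sum>x\<in>UNIV. (cmod (w x))\<^sup>2)"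
  unfolding of_real_sum by (intro sum.cong refl) (metis complex_norm_square mult.commute)

text \<open>With \<open>u = X\<^sup>2 v - v\<close> one gets \<open>X\<^sup>2 u = -u\<close>, so \<open>0 = \<langle>u, X\<^sup>2 u + u\<rangle> = \<parallel>X u\<parallel>\<^sup>2 + \<parallel>u\<parallel>\<^sup>2\<close>.\<close>
lemma lift_square_fixed_if_fourth_power_fixed:
  fixes X :: "'a::finite cmat" and v :: "'i::finite \<Rightarrow> complex"
  assumes f: "tensor_factor g p" and h: "hermitian X"
    and fourth: "lift g p (mmult (mmult X X) (mmult X X)) v = v"
  shows "lift g p (mmult X X) v = v"
proof -
  define u where "u = (\<lambda>x. lift g p (mmult X X) v x - v x)"
  have "\<And>x. lift g p X (lift g p X u) x + u x = 0"
    using fourth unfolding u_def lift_diff by (simp add: lift_mmult[OF f] mmult_assoc)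
  then have "0 = (\<Sum>x\<in>UNIV. cnj (u x) * lift g p X (lift g p X u) x) + (\<Sum>x\<in>UNIV. cnj (u x) * u x)"
    by (simp add: sum.distrib[symmetric] distrib_left[symmetric])
  also have "\<dots> = (\<Sum>x\<in>UNIV. cnj (lift g p X u x) * lift g p X u x) + (\<Sum>x\<in>UNIV. cnj (u x) * u x)"
    by (simp only: lift_hermitian_adjoint[OF f h])
  also have "\<dots> = complex_of_real ((\<Sum>x\<in>UNIV. (cmod (lift g p X u x))\<^sup>2) + (\<Sum>x\<in>UNIV. (cmod (u x))\<^sup>2))"
    by (simp add: sum_cnj_mult_self)
  finally have "(\<Sum>x\<in>UNIV. (cmod (lift g p X u x))\<^sup>2) + (\<Sum>x\<in>UNIV. (cmod (u x))\<^sup>2) = 0"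
    by (metis of_real_eq_0_iff)
  then have "(\<Sum>x\<in>UNIV. (cmod (u x))\<^sup>2) = 0"
    by (smt (verit) sum_nonneg zero_le_power2)
  then have "\<And>x. u x = 0"
    by (simp add: sum_nonneg_eq_0_iff)
  then show ?thesis
    unfolding u_def by (auto simp: fun_eq_iff)
qed

lemma square_of_commuting_product:
  fixes a b c d :: "'v \<Rightarrow> 'v"
  assumes "a (b (c (d v))) = v"
    and "\<And>w. a (b w) = b (a w)" "\<And>w. a (c w) = c (a w)" "\<And>w. a (d w) = d (a w)"
        "\<And>w. b (c w) = c (b w)" "\<And>w. b (d w) = d (b w)" "\<And>w. c (d w) = d (c w)"
  shows "a (a (b (b (c (c (d (d v))))))) = v"
  using assms by metis

text \<open>If \<open>X\<close>, \<open>Z\<close> are involutions and \<open>X X\<^sub>a X\<^sub>b X\<^sub>c\<close>, \<open>Z Z\<^sub>a Z\<^sub>b Z\<^sub>c\<close> stabilise \<open>\<psi>\<close>, then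
  \<open>X Z \<psi> = (Z\<^sub>aX\<^sub>a)(Z\<^sub>bX\<^sub>b)(Z\<^sub>cX\<^sub>c) \<psi>\<close> and \<open>Z X \<psi> = (X\<^sub>aZ\<^sub>a)(X\<^sub>bZ\<^sub>b)(X\<^sub>cZ\<^sub>c) \<psi>\<close>; the two
  sign changes from the factors \<open>a\<close>, \<open>b\<close> cancel, leaving the anticommutator of factor \<open>c\<close>.\<close>
lemma anticommute_on_transfer:
  fixes X Z :: "'k::finite cmat" and Xa Za :: "'a::finite cmat"
    and Xb Zb :: "'b::finite cmat" and Xc Zc :: "'c::finite cmat"
  assumes X: "mmult X X = mid" and Z: "mmult Z Z = mid"
    and SX: "lift g p X (lift ga pa Xa (lift gb pb Xb (lift gc pc Xc psi))) = psi"
    and SZ: "lift g p Z (lift ga pa Za (lift gb pb Zb (lift gc pc Zc psi))) = psi"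
    and anti_a: "anticommute Xa Za" and anti_b: "anticommute Xb Zb"
    and anti_c: "anticommute_on gc pc Xc Zc psi"
    and factors: "tensor_factor g p" "tensor_factor ga pa" "tensor_factor gb pb" "tensor_factor gc pc"
    and disjoint: "disjoint_factors g p ga pa" "disjoint_factors g p gb pb" "disjoint_factors g p gc pc"
      "disjoint_factors ga pa gb pb" "disjoint_factors ga pa gc pc" "disjoint_factors gb pb gc pc"
  shows "anticommute_on g p X Z psi"
proof -
  note normalize = disjoint(1-3)[THEN lift_commute, symmetric] disjoint(4-6)[THEN lift_commute]
    factors(2-4)[THEN lift_mmult]
  have "lift g p X psi = lift ga pa Xa (lift gb pb Xb (lift gc pc Xc psi))"
    using arg_cong[OF SX, of "lift g p X"] by (simp add: lift_mmult[OF factors(1)] X lift_mid factors)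
  moreover have "lift g p Z psi = lift ga pa Za (lift gb pb Zb (lift gc pc Zc psi))"
    using arg_cong[OF SZ, of "lift g p Z"] by (simp add: lift_mmult[OF factors(1)] Z lift_mid factors)
  ultimately have XZ: "lift g p X (lift g p Z psi)
        = lift ga pa (mmult Za Xa) (lift gb pb (mmult Zb Xb) (lift gc pc (mmult Zc Xc) psi))"
    and ZX: "lift g p Z (lift g p X psi)
        = lift ga pa (mmult Za Xa) (lift gb pb (mmult Zb Xb) (lift gc pc (mmult Xc Zc) psi))"
    by (simp_all add: normalize anticommute_mmult[OF anti_a] anticommute_mmult[OF anti_b]
        lift_uminus_matrix lift_uminus)
  have "(\<lambda>i. lift gc pc (mmult Zc Xc) psi i + lift gc pc (mmult Xc Zc) psi i) = (\<lambda>i. 0)"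
    using anti_c unfolding anticommute_on_def by (simp add: lift_mmult[OF factors(4)] add.commute)
  then show ?thesis
    unfolding anticommute_on_def XZ ZX lift_add[symmetric] by (simp add: lift_zero)
qed

lemma tensor_factor_coordinates:
  "tensor_factor get1 put1" "tensor_factor get2 put2" "tensor_factor get3 put3"
  "tensor_factor get4 put4" "tensor_factor get5 put5" "tensor_factor get6 put6"
  "tensor_factor get7 put7"
  by (simp_all add: tensor_factor_def get1_def put1_def get2_def put2_def get3_def put3_def
      get4_def put4_def get5_def put5_def get6_def put6_def get7_def put7_def split_paired_all)

lemma disjoint_coordinates:
  "disjoint_factors get1 put1 get2 put2" "disjoint_factors get1 put1 get3 put3"
  "disjoint_factors get1 put1 get4 put4" "disjoint_factors get1 put1 get5 put5"
  "disjoint_factors get1 put1 get6 put6" "disjoint_factors get1 put1 get7 put7"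
  "disjoint_factors get2 put2 get3 put3" "disjoint_factors get2 put2 get4 put4"
  "disjoint_factors get2 put2 get5 put5" "disjoint_factors get2 put2 get6 put6"
  "disjoint_factors get2 put2 get7 put7" "disjoint_factors get3 put3 get4 put4"
  "disjoint_factors get3 put3 get5 put5" "disjoint_factors get3 put3 get6 put6"
  "disjoint_factors get3 put3 get7 put7" "disjoint_factors get4 put4 get5 put5"
  "disjoint_factors get4 put4 get6 put6" "disjoint_factors get4 put4 get7 put7"
  "disjoint_factors get5 put5 get6 put6" "disjoint_factors get5 put5 get7 put7"
  "disjoint_factors get6 put6 get7 put7"
  by (simp_all add: disjoint_factors_def get1_def put1_def get2_def put2_def get3_def put3_def
      get4_def put4_def get5_def put5_def get6_def put6_def get7_def put7_def split_paired_all)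

lemmas coordinate_factors =
  tensor_factor_coordinates disjoint_coordinates disjoint_coordinates[THEN disjoint_factors_sym]

text \<open>Rewriting with these sorts a product of lifted operators by factor index and multiplies
  adjacent operators acting on the same factor.\<close>
lemmas lift_coordinates_normalize =
  disjoint_coordinates[THEN lift_commute]
  tensor_factor_coordinates[THEN lift_mmult]
  tensor_factor_coordinates[THEN lift_mid]

text \<open>Squaring the four stabilisers gives \<open>X\<^sub>5\<^sup>2X\<^sub>7\<^sup>2\<psi> = X\<^sub>2\<^sup>2X\<^sub>3\<^sup>2X\<^sub>7\<^sup>2\<psi> = X\<^sub>3\<^sup>2X\<^sub>5\<^sup>2X\<^sub>7\<^sup>2\<psi> =
  X\<^sub>2\<^sup>2X\<^sub>5\<^sup>2\<psi> = \<psi>\<close>, whence \<open>X\<^sub>3\<^sup>2\<psi> = X\<^sub>2\<^sup>2X\<^sub>7\<^sup>2\<psi> = \<psi>\<close> and \<open>X\<^sub>2\<^sup>4\<psi> = \<psi>\<close>; positivity of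
  \<open>X\<^sub>2\<^sup>2\<close> then resolves everything.\<close>
lemma stabilizer_squares_fixed:
  fixes psi :: "'a1::finite \<times> 'a2::finite \<times> 'a3::finite \<times> 'a4::finite \<times> 'a5::finite
                  \<times> 'a6::finite \<times> 'a7::finite \<times> 'e::finite \<Rightarrow> complex"
    and X1 :: "'a1 cmat" and X2 :: "'a2 cmat" and X3 :: "'a3 cmat" and X4 :: "'a4 cmat"
    and X5 :: "'a5 cmat" and X6 :: "'a6 cmat" and X7 :: "'a7 cmat"
  assumes herm: "hermitian X2"
    and S1: "lift get4 put4 X4 (lift get5 put5 X5 (lift get6 put6 X6 (lift get7 put7 X7 psi))) = psi"
    and S2: "lift get2 put2 X2 (lift get3 put3 X3 (lift get6 put6 X6 (lift get7 put7 X7 psi))) = psi"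
    and S3: "lift get1 put1 X1 (lift get3 put3 X3 (lift get5 put5 X5 (lift get7 put7 X7 psi))) = psi"
    and S4: "lift get1 put1 X1 (lift get2 put2 X2 (lift get5 put5 X5 (lift get6 put6 X6 psi))) = psi"
    and sq: "mmult X1 X1 = mid" "mmult X4 X4 = mid" "mmult X6 X6 = mid"
  shows "lift get1 put1 X1 (lift get1 put1 X1 psi) = psi"
    "lift get2 put2 X2 (lift get2 put2 X2 psi) = psi"
    "lift get3 put3 X3 (lift get3 put3 X3 psi) = psi"
    "lift get4 put4 X4 (lift get4 put4 X4 psi) = psi"
    "lift get5 put5 X5 (lift get5 put5 X5 psi) = psi"
    "lift get6 put6 X6 (lift get6 put6 X6 psi) = psi"
    "lift get7 put7 X7 (lift get7 put7 X7 psi) = psi"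
proof -
  note normalize = lift_coordinates_normalize sq
  have S1_sq: "lift get5 put5 (mmult X5 X5) (lift get7 put7 (mmult X7 X7) psi) = psi"
    using square_of_commuting_product[of "lift get4 put4 X4" "lift get5 put5 X5"
        "lift get6 put6 X6" "lift get7 put7 X7", OF S1] by (simp add: normalize)
  have S2_sq: "lift get2 put2 (mmult X2 X2) (lift get3 put3 (mmult X3 X3) (lift get7 put7 (mmult X7 X7) psi)) = psi"
    using square_of_commuting_product[of "lift get2 put2 X2" "lift get3 put3 X3"
        "lift get6 put6 X6" "lift get7 put7 X7", OF S2] by (simp add: normalize)
  have S3_sq: "lift get3 put3 (mmult X3 X3) (lift get5 put5 (mmult X5 X5) (lift get7 put7 (mmult X7 X7) psi)) = psi"
    using square_of_commuting_product[of "lift get1 put1 X1" "lift get3 put3 X3"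
        "lift get5 put5 X5" "lift get7 put7 X7", OF S3] by (simp add: normalize)
  have S4_sq: "lift get2 put2 (mmult X2 X2) (lift get5 put5 (mmult X5 X5) psi) = psi"
    using square_of_commuting_product[of "lift get1 put1 X1" "lift get2 put2 X2"
        "lift get5 put5 X5" "lift get6 put6 X6", OF S4] by (simp add: normalize)
  have sq3: "lift get3 put3 (mmult X3 X3) psi = psi"
    using S3_sq by (simp only: S1_sq)
  have "lift get2 put2 (mmult X2 X2) (lift get7 put7 (mmult X7 X7) psi)
      = lift get2 put2 (mmult X2 X2) (lift get7 put7 (mmult X7 X7) (lift get3 put3 (mmult X3 X3) psi))"
    by (simp only: sq3)
  also have "\<dots> = psi"
    using S2_sq by (simp only: normalize)
  finally have sq27: "lift get2 put2 (mmult X2 X2) (lift get7 put7 (mmult X7 X7) psi) = psi" .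
  have "lift get2 put2 (mmult (mmult X2 X2) (mmult X2 X2)) psi
      = lift get2 put2 (mmult X2 X2) (lift get5 put5 (mmult X5 X5)
          (lift get2 put2 (mmult X2 X2) (lift get7 put7 (mmult X7 X7) psi)))"
    by (simp add: normalize S1_sq)
  also have "\<dots> = psi"
    by (simp only: sq27 S4_sq)
  finally have sq2: "lift get2 put2 (mmult X2 X2) psi = psi"
    by (rule lift_square_fixed_if_fourth_power_fixed[OF tensor_factor_coordinates(2) herm])
  have "lift get7 put7 (mmult X7 X7) psi = lift get7 put7 (mmult X7 X7) (lift get2 put2 (mmult X2 X2) psi)"
    by (simp only: sq2)
  also have "\<dots> = psi"
    using sq27 by (simp only: normalize)
  finally have sq7: "lift get7 put7 (mmult X7 X7) psi = psi" .
  have "lift get5 put5 (mmult X5 X5) psi = lift get5 put5 (mmult X5 X5) (lift get2 put2 (mmult X2 X2) psi)"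
    by (simp only: sq2)
  also have "\<dots> = psi"
    using S4_sq by (simp only: normalize)
  finally have sq5: "lift get5 put5 (mmult X5 X5) psi = psi" .
  show "lift get1 put1 X1 (lift get1 put1 X1 psi) = psi"
    "lift get2 put2 X2 (lift get2 put2 X2 psi) = psi"
    "lift get3 put3 X3 (lift get3 put3 X3 psi) = psi"
    "lift get4 put4 X4 (lift get4 put4 X4 psi) = psi"
    "lift get5 put5 X5 (lift get5 put5 X5 psi) = psi"
    "lift get6 put6 X6 (lift get6 put6 X6 psi) = psi"
    "lift get7 put7 X7 (lift get7 put7 X7 psi) = psi"
    by (simp_all add: normalize sq2 sq3 sq5 sq7)
qed

theorem mainTheorem5:
  fixes psi :: "'a1::finite \<times> 'a2::finite \<times> 'a3::finite \<times> 'a4::finite \<times> 'a5::finite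
                  \<times> 'a6::finite \<times> 'a7::finite \<times> 'e::finite \<Rightarrow> complex"
    and X1 Z1 :: "'a1 cmat" and X2 Z2 :: "'a2 cmat" and X3 Z3 :: "'a3 cmat"
    and X4 Z4 :: "'a4 cmat" and X5 Z5 :: "'a5 cmat" and X6 Z6 :: "'a6 cmat"
    and X7 Z7 :: "'a7 cmat"
  assumes herm: "hermitian X1" "hermitian Z1" "hermitian X2" "hermitian Z2"
                "hermitian X3" "hermitian Z3" "hermitian X4" "hermitian Z4"
                "hermitian X5" "hermitian Z5" "hermitian X6" "hermitian Z6"
                "hermitian X7" "hermitian Z7"
    and anti: "anticommute X2 Z2" "anticommute X3 Z3" "anticommute X5 Z5" "anticommute X7 Z7"
    and S1: "lift get4 put4 X4 (lift get5 put5 X5 (lift get6 put6 X6 (lift get7 put7 X7 psi))) = psi"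
    and S2: "lift get2 put2 X2 (lift get3 put3 X3 (lift get6 put6 X6 (lift get7 put7 X7 psi))) = psi"
    and S3: "lift get1 put1 X1 (lift get3 put3 X3 (lift get5 put5 X5 (lift get7 put7 X7 psi))) = psi"
    and S4: "lift get1 put1 X1 (lift get2 put2 X2 (lift get5 put5 X5 (lift get6 put6 X6 psi))) = psi"
    and S5: "lift get4 put4 Z4 (lift get5 put5 Z5 (lift get6 put6 Z6 (lift get7 put7 Z7 psi))) = psi"
    and S6: "lift get2 put2 Z2 (lift get3 put3 Z3 (lift get6 put6 Z6 (lift get7 put7 Z7 psi))) = psi"
    and S7: "lift get1 put1 Z1 (lift get3 put3 Z3 (lift get5 put5 Z5 (lift get7 put7 Z7 psi))) = psi"
    and S8: "lift get1 put1 Z1 (lift get2 put2 Z2 (lift get5 put5 Z5 (lift get6 put6 Z6 psi))) = psi"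
    and sq: "mmult X1 X1 = mid" "mmult Z1 Z1 = mid" "mmult X4 X4 = mid" "mmult Z4 Z4 = mid"
            "mmult X6 X6 = mid" "mmult Z6 Z6 = mid"
  shows "concl_at get1 put1 X1 Z1 psi \<and> concl_at get2 put2 X2 Z2 psi \<and>
         concl_at get3 put3 X3 Z3 psi \<and> concl_at get4 put4 X4 Z4 psi \<and>
         concl_at get5 put5 X5 Z5 psi \<and> concl_at get6 put6 X6 Z6 psi \<and>
         concl_at get7 put7 X7 Z7 psi"
proof -
  note X_sq = stabilizer_squares_fixed[OF herm(3) S1 S2 S3 S4 sq(1,3,5)]
  note Z_sq = stabilizer_squares_fixed[OF herm(4) S5 S6 S7 S8 sq(2,4,6)]
  note anti2 = anticommute_on_if_anticommute[OF tensor_factor_coordinates(2) anti(1), of psi]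
  note anti3 = anticommute_on_if_anticommute[OF tensor_factor_coordinates(3) anti(2), of psi]
  note anti5 = anticommute_on_if_anticommute[OF tensor_factor_coordinates(5) anti(3), of psi]
  note anti7 = anticommute_on_if_anticommute[OF tensor_factor_coordinates(7) anti(4), of psi]
  have anti1: "anticommute_on get1 put1 X1 Z1 psi"
    by (rule anticommute_on_transfer[OF sq(1,2) S3 S7 anti(2,3) anti7]) (fact coordinate_factors)+
  have "lift get6 put6 X6 (lift get2 put2 X2 (lift get3 put3 X3 (lift get7 put7 X7 psi))) = psi"
    "lift get6 put6 Z6 (lift get2 put2 Z2 (lift get3 put3 Z3 (lift get7 put7 Z7 psi))) = psi"
    using S2 S6 by (simp_all only: lift_coordinates_normalize)
  then have anti6: "anticommute_on get6 put6 X6 Z6 psi"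
    by (rule anticommute_on_transfer[OF sq(5,6) _ _ anti(1,2) anti7]) (fact coordinate_factors)+
  have "lift get4 put4 X4 (lift get5 put5 X5 (lift get7 put7 X7 (lift get6 put6 X6 psi))) = psi"
    "lift get4 put4 Z4 (lift get5 put5 Z5 (lift get7 put7 Z7 (lift get6 put6 Z6 psi))) = psi"
    using S1 S5 by (simp_all only: lift_coordinates_normalize)
  then have anti4: "anticommute_on get4 put4 X4 Z4 psi"
    by (rule anticommute_on_transfer[OF sq(3,4) _ _ anti(3,4) anti6]) (fact coordinate_factors)+
  show ?thesis
    using X_sq Z_sq anti1 anti2 anti3 anti4 anti5 anti6 anti7
    by (simp add: concl_at_def anticommute_on_def)
qed

end
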